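(* Let $\Theta$ be a finite set, $b$ a belief function on $\Theta$ with mass function $m_b$, and $\emptyset \subsetneq A \subseteq \Theta$. The set of $L_1$ conditional belief functions of $b$ with respect to $A$ in the mass space, i.e. the set of belief functions $a$ with $\vec{m}_a \in \mathcal{M}_A$ minimizing $\|\vec{m}_b - \vec{m}_a\|_{L_1}$ over $\mathcal{M}_A$, is \[ \Big\{ a : 2^\Theta\to[0,1] \text{ belief function} : \mathcal{C}_a \subseteq A,\ m_a(B) \geq m_b(B)\ \forall\, \emptyset \subsetneq B \subseteq A \Big\}. \]
   Context: A mass function on a finite set $\Theta$ is $m:2^\Theta\to[0,1]$ with $m(\emptyset)=0$ and $\sum_{A\subseteq\Theta} m(A)=1$; the associated belief function is $b(A)=\sum_{B\subseteq A} m_b(B)$. Focal elements are subsets with nonzero mass; the core $\mathcal{C}_a$ of a belief function $a$ is the union of its focal elements. The mass vector of $b$ is $\vec{m}_b=[m_b(B)]_{\emptyset\subsetneq B\subseteq\Theta}\in\mathbb{R}^{2^{|\Theta|}-1}$. For $\emptyset\subsetneq A\subseteq\Theta$, $\mathcal{M}_A$ is the set of mass vectors of belief functions all of whose focal elements are subsets of $A$ (the convex hull of the mass vectors of the categorical belief functions $m(B)=1$, $\emptyset\subsetneq B\subseteq A$). The $L_1$ distance is $\|\vec{m}_b-\vec{m}_{b'}\|_{L_1}=\sum_{\emptyset\subsetneq B\subseteq\Theta}|m_b(B)-m_{b'}(B)|$. *)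

theory Defs
  imports Complex_Main
begin

text \<open>The frame Theta is the (finite) universe of the type 'a. A mass function is a
function on all subsets of Theta.\<close>

definition is_mass :: "('a::finite set \<Rightarrow> real) \<Rightarrow> bool" where
  "is_mass m \<longleftrightarrow> m {} = 0 \<and> (\<forall>B. 0 \<le> m B \<and> m B \<le> 1) \<and> (\<Sum>B\<in>UNIV. m B) = 1"

definition bel :: "('a::finite set \<Rightarrow> real) \<Rightarrow> 'a set \<Rightarrow> real" where
  "bel m A = (\<Sum>B\<in>Pow A. m B)"

definition focal_elements :: "('a::finite set \<Rightarrow> real) \<Rightarrow> 'a set set" where
  "focal_elements m = {B. m B \<noteq> 0}"

definition core :: "('a::finite set \<Rightarrow> real) \<Rightarrow> 'a set" where
  "core m = \<Union>(focal_elements m)"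

definition mass_space_M :: "'a::finite set \<Rightarrow> ('a set \<Rightarrow> real) set" where
  "mass_space_M A = {m. is_mass m \<and> (\<forall>B\<in>focal_elements m. B \<subseteq> A)}"

definition L1_dist :: "('a::finite set \<Rightarrow> real) \<Rightarrow> ('a set \<Rightarrow> real) \<Rightarrow> real" where
  "L1_dist m m' = (\<Sum>B\<in>{B. B \<noteq> {}}. \<bar>m B - m' B\<bar>)"

end

theory Submission
  imports Defs
begin

text \<open>For a mass function supported in A, each term of the L1 distance inside A is
  |x - y| = (y - x) + 2 max (x - y) 0; the terms (y - x) sum to the mass k that mb puts
  outside A, and the terms outside A contribute k once more. Hence the distance is at least
  2k, with equality exactly when m dominates mb on the nonempty subsets of A, and moving the
  mass k onto A itself attains this bound.\<close>

lemma argmin_eq_level_set: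
  fixes f :: "'b \<Rightarrow> 'c::linorder"
  assumes "\<And>x. x \<in> S \<Longrightarrow> c \<le> f x" and "x0 \<in> S" and "f x0 = c"
  shows "{x \<in> S. \<forall>y \<in> S. f x \<le> f y} = {x \<in> S. f x = c}"
proof (intro equalityI subsetI)
  fix x
  assume "x \<in> {x \<in> S. \<forall>y \<in> S. f x \<le> f y}"
  then have "x \<in> S" and "f x \<le> c"
    using assms(2,3) by auto
  then show "x \<in> {x \<in> S. f x = c}"
    using assms(1) by (simp add: order_antisym)
next
  fix x
  assume "x \<in> {x \<in> S. f x = c}"
  then show "x \<in> {x \<in> S. \<forall>y \<in> S. f x \<le> f y}"
    using assms(1) by simp
qed

lemma sum_nonempty_split:
  fixes f :: "'a::finite set \<Rightarrow> 'b::comm_monoid_add"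
  shows "sum f {B. B \<noteq> {}} = sum f {B. B \<noteq> {} \<and> B \<subseteq> A} + sum f {B. \<not> B \<subseteq> A}"
proof -
  have "{B. B \<noteq> {}} = {B. B \<noteq> {} \<and> B \<subseteq> A} \<union> {B. \<not> B \<subseteq> A}" by auto
  then show ?thesis by (simp add: sum.union_disjoint disjoint_iff)
qed

lemma sum_nonempty_eq_sum_UNIV:
  fixes f :: "'a::finite set \<Rightarrow> 'b::comm_monoid_add"
  assumes "f {} = 0"
  shows "sum f {B. B \<noteq> {}} = sum f UNIV"
proof -
  have "UNIV = insert {} {B::'a set. B \<noteq> {}}" by auto
  then have "sum f UNIV = sum f (insert {} {B. B \<noteq> {}})" by simp
  with assms show ?thesis by simp
qed

lemma is_mass_sum_nonempty:
  assumes "is_mass m"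
  shows "sum m {B. B \<noteq> {}} = 1"
  using assms sum_nonempty_eq_sum_UNIV[of m] by (simp add: is_mass_def)

lemma mass_space_M_iff_core: "m \<in> mass_space_M A \<longleftrightarrow> is_mass m \<and> core m \<subseteq> A"
  unfolding mass_space_M_def core_def by auto

lemma mass_space_M_outside:
  assumes "m \<in> mass_space_M A" and "\<not> B \<subseteq> A"
  shows "m B = 0"
  using assms unfolding mass_space_M_def focal_elements_def by auto

lemma L1_dist_mass_space_M:
  assumes mb: "is_mass mb" and m: "m \<in> mass_space_M A"
  shows "L1_dist mb m = 2 * (sum mb {B. \<not> B \<subseteq> A}
           + (\<Sum>B\<in>{B. B \<noteq> {} \<and> B \<subseteq> A}. max (mb B - m B) 0))"
proof -
  let ?S = "{B. B \<noteq> {} \<and> B \<subseteq> A}" and ?k = "sum mb {B. \<not> B \<subseteq> A}"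
  have "sum m {B. \<not> B \<subseteq> A} = 0"
    using mass_space_M_outside[OF m] by simp
  moreover have "is_mass m"
    using m by (simp add: mass_space_M_def)
  ultimately have m_inside: "sum m ?S = 1"
    using is_mass_sum_nonempty[of m] sum_nonempty_split[of m A] by simp
  have mb_inside: "sum mb ?S = 1 - ?k"
    using is_mass_sum_nonempty[OF mb] sum_nonempty_split[of mb A] by simp
  have outside: "(\<Sum>B\<in>{B. \<not> B \<subseteq> A}. \<bar>mb B - m B\<bar>) = ?k"
    using mass_space_M_outside[OF m] mb by (intro sum.cong) (auto simp: is_mass_def)
  have "(\<Sum>B\<in>?S. \<bar>mb B - m B\<bar>) = (\<Sum>B\<in>?S. (m B - mb B) + 2 * max (mb B - m B) 0)"
    by (intro sum.cong refl) (simp add: abs_real_def max_def)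
  also have "\<dots> = (sum m ?S - sum mb ?S) + 2 * (\<Sum>B\<in>?S. max (mb B - m B) 0)"
    by (simp only: sum.distrib sum_subtractf sum_distrib_left)
  also have "\<dots> = ?k + 2 * (\<Sum>B\<in>?S. max (mb B - m B) 0)"
    by (simp add: m_inside mb_inside)
  finally show ?thesis
    using outside sum_nonempty_split[of "\<lambda>B. \<bar>mb B - m B\<bar>" A] by (simp add: L1_dist_def)
qed

lemma L1_dist_mass_space_M_lower_bound:
  assumes "is_mass mb" and "m \<in> mass_space_M A"
  shows "2 * sum mb {B. \<not> B \<subseteq> A} \<le> L1_dist mb m"
proof -
  have "0 \<le> (\<Sum>B\<in>{B. B \<noteq> {} \<and> B \<subseteq> A}. max (mb B - m B) 0)"
    by (intro sum_nonneg) simp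
  then show ?thesis
    using L1_dist_mass_space_M[OF assms] by simp
qed

lemma L1_dist_mass_space_M_eq_lower_bound_iff:
  assumes "is_mass mb" and "m \<in> mass_space_M A"
  shows "L1_dist mb m = 2 * sum mb {B. \<not> B \<subseteq> A}
           \<longleftrightarrow> (\<forall>B. B \<noteq> {} \<and> B \<subseteq> A \<longrightarrow> mb B \<le> m B)"
proof -
  let ?S = "{B. B \<noteq> {} \<and> B \<subseteq> A}"
  have "L1_dist mb m = 2 * sum mb {B. \<not> B \<subseteq> A}
          \<longleftrightarrow> (\<Sum>B\<in>?S. max (mb B - m B) 0) = 0"
    using L1_dist_mass_space_M[OF assms] by simp
  also have "\<dots> \<longleftrightarrow> (\<forall>B\<in>?S. max (mb B - m B) 0 = 0)"
    by (intro sum_nonneg_eq_0_iff) simp_all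
  also have "\<dots> \<longleftrightarrow> (\<forall>B\<in>?S. mb B \<le> m B)"
    by (intro ball_cong refl) linarith
  finally show ?thesis
    by simp
qed

definition transfer_to :: "'a::finite set \<Rightarrow> ('a set \<Rightarrow> real) \<Rightarrow> 'a set \<Rightarrow> real" where
  "transfer_to A m B =
     (if B = A then m A + sum m {C. \<not> C \<subseteq> A} else if B \<subseteq> A then m B else 0)"

lemma transfer_to_outside: "\<not> B \<subseteq> A \<Longrightarrow> transfer_to A m B = 0"
  by (auto simp: transfer_to_def)

lemma transfer_to_in_mass_space_M:
  assumes m: "is_mass m" and "A \<noteq> {}"
  shows "transfer_to A m \<in> mass_space_M A"
proof -
  let ?t = "transfer_to A m" and ?S = "{B. B \<noteq> {} \<and> B \<subseteq> A}"
  have nonneg: "0 \<le> ?t B" for B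
    using m by (simp add: transfer_to_def is_mass_def sum_nonneg)
  have "sum ?t ?S = (\<Sum>B\<in>?S. m B + (if B = A then sum m {C. \<not> C \<subseteq> A} else 0))"
    by (intro sum.cong) (auto simp: transfer_to_def)
  also have "\<dots> = sum m {B. B \<noteq> {}}"
    using \<open>A \<noteq> {}\<close> sum_nonempty_split[of m A] by (simp add: sum.distrib)
  moreover have "sum ?t {B. \<not> B \<subseteq> A} = 0"
    by (intro sum.neutral) (simp add: transfer_to_outside)
  ultimately have "sum ?t {B. B \<noteq> {}} = 1"
    using is_mass_sum_nonempty[OF m] sum_nonempty_split[of ?t A] by simp
  moreover have "?t {} = 0"
    using m \<open>A \<noteq> {}\<close> by (simp add: transfer_to_def is_mass_def)
  ultimately have total: "sum ?t UNIV = 1"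
    using sum_nonempty_eq_sum_UNIV[of ?t] by simp
  have "?t B \<le> 1" for B
    using member_le_sum[of B UNIV ?t] nonneg total by simp
  moreover have "B \<subseteq> A" if "?t B \<noteq> 0" for B
    using that transfer_to_outside by blast
  ultimately show ?thesis
    using nonneg total \<open>?t {} = 0\<close>
    unfolding mass_space_M_def is_mass_def focal_elements_def by blast
qed

lemma transfer_to_ge:
  assumes "is_mass m" and "B \<subseteq> A"
  shows "m B \<le> transfer_to A m B"
  using assms by (simp add: transfer_to_def is_mass_def sum_nonneg)

theorem theorem1:
  fixes mb :: "'a::finite set \<Rightarrow> real" and A :: "'a set"
  assumes "is_mass mb" and "A \<noteq> {}"
  shows "{ma \<in> mass_space_M A. \<forall>m' \<in> mass_space_M A. L1_dist mb ma \<le> L1_dist mb m'}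
       = {ma. is_mass ma \<and> core ma \<subseteq> A \<and> (\<forall>B. B \<noteq> {} \<and> B \<subseteq> A \<longrightarrow> mb B \<le> ma B)}"
proof -
  let ?c = "2 * sum mb {B. \<not> B \<subseteq> A}"
  have "{ma \<in> mass_space_M A. \<forall>m' \<in> mass_space_M A. L1_dist mb ma \<le> L1_dist mb m'}
      = {ma \<in> mass_space_M A. L1_dist mb ma = ?c}"
  proof (rule argmin_eq_level_set)
    show "?c \<le> L1_dist mb m" if "m \<in> mass_space_M A" for m
      using assms(1) that by (rule L1_dist_mass_space_M_lower_bound)
    show transfer_in: "transfer_to A mb \<in> mass_space_M A"
      using assms by (rule transfer_to_in_mass_space_M)
    show "L1_dist mb (transfer_to A mb) = ?c"
      using transfer_to_ge[OF assms(1)]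
      by (simp add: L1_dist_mass_space_M_eq_lower_bound_iff[OF assms(1) transfer_in])
  qed
  also have "\<dots> = {ma. is_mass ma \<and> core ma \<subseteq> A \<and> (\<forall>B. B \<noteq> {} \<and> B \<subseteq> A \<longrightarrow> mb B \<le> ma B)}"
    using L1_dist_mass_space_M_eq_lower_bound_iff[OF assms(1)] mass_space_M_iff_core by auto
  finally show ?thesis .
qed

end
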